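(* Let $X_1,X_2,\dots$ be i.i.d. with $\mathbf{E}X_1=-a<0$ and $\mathrm{Var}(X_1)<\infty$. Assume $\overline F(x)\sim e^{-g(x)}x^{-2}$ as $x\to\infty$, where $g:(0,\infty)\to\mathbb{R}$ is continuously differentiable, nondecreasing for all sufficiently large $x$, and $x\mapsto g(x)/x$ is nonincreasing on $(0,\infty)$ with $g(x)/x\to0$. Then there exists a constant $C>0$ such that for all integers $n\ge1$, all $x>0$ and all sufficiently large $y$, \[ \mathbf{P}(A_n>x,\ \overline X_n\le y)\le\exp\left\{-\lambda\frac{x}{n}-\lambda\frac{an}{2}+C\lambda^2n\right\},\qquad\text{where }\lambda=\frac{g(y)}{y}. \]
   Context: $S_n=X_1+\dots+X_n$, $\overline F(x)=\mathbf{P}(X_1>x)$, $A_n=\sum_{k=1}^{n}S_k=\sum_{j=1}^n(n-j+1)X_j$, and $\overline X_n=\max(X_1,\dots,X_n)$. *)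

theory Defs
  imports "HOL-Probability.Probability" "HOL-Library.Landau_Symbols"
begin

definition partial_sum :: "(nat \<Rightarrow> 'a \<Rightarrow> real) \<Rightarrow> nat \<Rightarrow> 'a \<Rightarrow> real" where
  "partial_sum X n \<omega> = (\<Sum>j=1..n. X j \<omega>)"

definition sum_partial_sums :: "(nat \<Rightarrow> 'a \<Rightarrow> real) \<Rightarrow> nat \<Rightarrow> 'a \<Rightarrow> real" where
  "sum_partial_sums X n \<omega> = (\<Sum>k=1..n. partial_sum X k \<omega>)"

definition running_max :: "(nat \<Rightarrow> 'a \<Rightarrow> real) \<Rightarrow> nat \<Rightarrow> 'a \<Rightarrow> real" where
  "running_max X n \<omega> = Max ((\<lambda>j. X j \<omega>) ` {1..n})"

end

theory Submission
  imports Defs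
begin

text \<open>Let lambda = g(y)/y. Chernoff's bound for A_n = sum_j (n + 1 - j) X_j at rate lambda/n, restricted
  to the event max_j X_j <= y, factorises by independence into truncated moment generating functions
  E[exp(t X); X <= y] with t = lambda (n + 1 - j)/n in [0, lambda]. Each is at most exp(- t a + C t^2):
  use exp(s) <= 1 + s + s^2 where t X <= 1, and exp(m + 1) on {m < t X <= m + 1}. As g(x)/x is
  nonincreasing, m/t <= y forces g(m/t) >= m, so the tail assumption gives
  exp(m + 1) P(X > m/t) <= 2 e K t^2/m^2, which is summable in m. The weights average to
  lambda (n + 1)/2, which produces the drift term - lambda a n/2.\<close>

lemma exp_le_1_plus_square:
  fixes s :: real
  assumes "s \<le> 1"
  shows "exp s \<le> 1 + s + s\<^sup>2"
proof (cases "s \<ge> 0")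
  case True
  then show ?thesis using exp_bound assms by auto
next
  case False
  define r where "r = - s"
  have r: "r > 0" using False r_def by auto
  have "exp s = 1 / exp r" by (simp add: r_def exp_minus field_simps)
  also have "\<dots> \<le> 1 / (1 + r)" using r exp_ge_add_one_self[of r]
    by (intro divide_left_mono) auto
  also have "\<dots> \<le> 1 - r + r\<^sup>2"
  proof -
    have "1 \<le> (1 - r + r\<^sup>2) * (1 + r)" using r by (simp add: algebra_simps power2_eq_square)
    then show ?thesis using r by (simp add: field_simps)
  qed
  finally show ?thesis by (simp add: r_def)
qed

lemma sum_inverse_squares_le_2: "(\<Sum>m=1..N. 1 / (real m)\<^sup>2) \<le> 2"
proof -
  have "(\<Sum>m=1..N. 1 / (real m)\<^sup>2) \<le> 2 - 1 / real (max 1 N)"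
  proof (induction N)
    case 0
    then show ?case by simp
  next
    case (Suc N)
    show ?case
    proof (cases "N = 0")
      case True
      then show ?thesis by simp
    next
      case False
      have "1 / (real (Suc N))\<^sup>2 \<le> 1 / (real N * real (Suc N))"
        using False by (intro divide_left_mono) (auto simp: power2_eq_square)
      also have "\<dots> = 1 / real N - 1 / real (Suc N)"
        using False by (simp add: field_simps)
      finally show ?thesis using Suc False by simp
    qed
  qed
  also have "\<dots> \<le> 2" by simp
  finally show ?thesis .
qed

lemma sum_linear_weights:
  fixes l :: real
  assumes "n \<ge> 1"
  shows "(\<Sum>j=1..n. l / real n * real (Suc n - j)) = l * (real n + 1) / 2"
proof -
  have "(\<Sum>j=1..n. real (Suc n - j)) = (\<Sum>j=1..n. real j)"
    using sum.atLeastAtMost_rev[of real 1 n] by simp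
  also have "\<dots> = real n * (real n + 1) / 2"
    by (induction n) (auto simp: field_simps)
  finally have weights: "(\<Sum>j=1..n. real (Suc n - j)) = real n * (real n + 1) / 2" .
  have "(\<Sum>j=1..n. l / real n * real (Suc n - j)) = l / real n * (\<Sum>j=1..n. real (Suc n - j))"
    by (rule sum_distrib_left[symmetric])
  also have "\<dots> = l / real n * (real n * (real n + 1) / 2)" by (simp only: weights)
  also have "\<dots> = l * (real n + 1) / 2" using assms by (simp add: field_simps)
  finally show ?thesis .
qed

lemma linear_weight_bounds:
  fixes l :: real
  assumes "l \<ge> 0" "j \<in> {1..n}"
  shows "0 \<le> l / real n * real (Suc n - j)" "l / real n * real (Suc n - j) \<le> l"
proof -
  have "l / real n * real (Suc n - j) \<le> l / real n * real n"
    using assms by (intro mult_left_mono) auto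
  then show "l / real n * real (Suc n - j) \<le> l" using assms by auto
qed (use assms in simp)

lemma sum_linear_weights_exponent_le:
  fixes l a C :: real
  assumes n: "n \<ge> 1" and l: "l \<ge> 0" and a: "a \<ge> 0" and C: "C \<ge> 0"
  defines "t \<equiv> \<lambda>j. l / real n * real (Suc n - j)"
  shows "(\<Sum>j=1..n. - t j * a + C * (t j)\<^sup>2) \<le> - l * a * real n / 2 + C * l\<^sup>2 * real n"
proof -
  have "(\<Sum>j=1..n. - t j * a + C * (t j)\<^sup>2) = - a * (\<Sum>j=1..n. t j) + C * (\<Sum>j=1..n. (t j)\<^sup>2)"
    by (simp add: sum_subtractf sum_negf sum_distrib_left mult.commute)
  also have "(\<Sum>j=1..n. t j) = l * (real n + 1) / 2"
    unfolding t_def using sum_linear_weights[OF n] .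
  also have "(\<Sum>j=1..n. (t j)\<^sup>2) \<le> (\<Sum>j=1..n. l\<^sup>2)"
    using linear_weight_bounds[OF l] by (intro sum_mono power_mono) (auto simp: t_def)
  finally have "(\<Sum>j=1..n. - t j * a + C * (t j)\<^sup>2) \<le> - a * (l * (real n + 1) / 2) + C * (real n * l\<^sup>2)"
    using C by (simp add: mult_left_mono)
  also have "\<dots> \<le> - l * a * real n / 2 + C * l\<^sup>2 * real n"
    using mult_nonneg_nonneg[OF a l] by (simp add: field_simps)
  finally show ?thesis .
qed

lemma nonneg_if_mono_on_and_ratio_antimono:
  fixes g :: "real \<Rightarrow> real"
  assumes mono: "mono_on {x0..} g" and anti: "antimono_on {0<..} (\<lambda>x. g x / x)"
    and y: "y \<ge> x0" "y > 0"
  shows "g y \<ge> 0"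
proof -
  define z where "z = 2 * y"
  have z: "z > y" "z > 0" using y by (auto simp: z_def)
  have "g y \<le> g z" using mono y z by (auto simp: monotone_on_def)
  moreover have "g z / z \<le> g y / y" using anti y z by (auto simp: monotone_on_def)
  ultimately have "g y \<le> z * (g y / y)" using z by (simp add: field_simps)
  then have "0 \<le> g y * (z - y)" using y by (simp add: field_simps)
  then show ?thesis using z by (simp add: zero_le_mult_iff)
qed

lemma tail_bound_if_asymp_equiv:
  fixes f g :: "real \<Rightarrow> real"
  assumes "f \<sim>[at_top] (\<lambda>x. exp (- g x) * x powi (-2))"
  shows "\<exists>u0>0. \<forall>u\<ge>u0. f u \<le> 2 * exp (- g u) / u\<^sup>2"
proof -
  have "\<forall>\<^sub>F u in at_top. norm (f u) \<le> 2 * norm (exp (- g u) * u powi (-2))"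
    by (rule asymp_equiv_imp_eventually_le[OF assms]) simp
  then obtain u1 where u1: "\<And>u. u \<ge> u1 \<Longrightarrow> norm (f u) \<le> 2 * norm (exp (- g u) * u powi (-2))"
    by (auto simp: eventually_at_top_linorder)
  have "f u \<le> 2 * exp (- g u) / u\<^sup>2" if "u \<ge> max u1 1" for u
    using u1[of u] that by (simp add: power_int_minus divide_inverse)
  then show ?thesis by (intro exI[of _ "max u1 1"]) auto
qed

text \<open>On {m < t u <= m + 1} with u <= y, the m-th summand alone dominates exp(t u).\<close>

lemma exp_indicator_atMost_le:
  fixes t y u :: real
  assumes t: "t \<ge> 0"
  shows "exp (t * u) * indicator {..y} u \<le> 1 + t * u + (t * u)\<^sup>2
     + (\<Sum>m=1..nat \<lfloor>t * y\<rfloor>. exp (real m + 1) * indicator {real m / t<..} u)"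
proof -
  have sum_nonneg: "(\<Sum>m=1..nat \<lfloor>t * y\<rfloor>. exp (real m + 1) * indicator {real m / t<..} u) \<ge> 0"
    by (intro sum_nonneg) auto
  have quad_nonneg: "1 + t * u + (t * u)\<^sup>2 \<ge> 0"
    using sum_squares_ge_zero[of "t * u + 1/2" 0]
    by (simp add: power2_eq_square algebra_simps)
  consider "u > y" | "u \<le> y" "t * u \<le> 1" | "u \<le> y" "t * u > 1" by linarith
  then show ?thesis
  proof cases
    case 1
    then show ?thesis using sum_nonneg quad_nonneg by simp
  next
    case 2
    then show ?thesis using sum_nonneg exp_le_1_plus_square[of "t * u"] by simp
  next
    case 3
    have t_pos: "t > 0" using 3 t by (cases "t = 0") auto
    define m where "m = nat (\<lceil>t * u\<rceil> - 1)"
    have m: "m \<ge> 1" "real m < t * u" "t * u \<le> real m + 1" unfolding m_def using 3 by linarith+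
    have "t * u \<le> t * y" using 3 t by (simp add: mult_left_mono)
    then have m_le: "m \<le> nat \<lfloor>t * y\<rfloor>" using m by linarith
    have "real m / t < u" using m t_pos by (simp add: field_simps)
    have "exp (t * u) * indicator {..y} u = exp (t * u)" using 3 by simp
    also have "\<dots> \<le> exp (real m + 1) * indicator {real m / t<..} u"
      using m \<open>real m / t < u\<close> by simp
    also have "\<dots> \<le> (\<Sum>m=1..nat \<lfloor>t * y\<rfloor>. exp (real m + 1) * indicator {real m / t<..} u)"
      using m m_le by (intro member_le_sum) auto
    finally show ?thesis using quad_nonneg by linarith
  qed
qed

lemma sum_exp_tail_le:
  fixes P g :: "real \<Rightarrow> real"
  assumes tail: "\<And>u. u \<ge> u0 \<Longrightarrow> P u \<le> K * exp (- g u) / u\<^sup>2"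
    and u0: "u0 > 0" and K: "K \<ge> 0"
    and anti: "antimono_on {0<..} (\<lambda>x. g x / x)"
    and y: "y > 0" and t: "0 \<le> t" "t \<le> g y / y" "t * u0 \<le> 1"
  shows "(\<Sum>m=1..nat \<lfloor>t * y\<rfloor>. exp (real m + 1) * P (real m / t)) \<le> 2 * exp 1 * K * t\<^sup>2"
proof -
  have "(\<Sum>m=1..nat \<lfloor>t * y\<rfloor>. exp (real m + 1) * P (real m / t))
      \<le> (\<Sum>m=1..nat \<lfloor>t * y\<rfloor>. exp 1 * K * t\<^sup>2 * (1 / (real m)\<^sup>2))"
  proof (rule sum_mono)
    fix m assume m: "m \<in> {1..nat \<lfloor>t * y\<rfloor>}"
    then have m_ge: "real m \<ge> 1" and m_le: "real m \<le> t * y" by auto linarith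
    then have t_pos: "t > 0" using t(1) by (cases "t = 0") auto
    define v where "v = real m / t"
    have v_pos: "v > 0" using t_pos m_ge by (simp add: v_def)
    have "v \<le> y" using m_le t_pos by (simp add: v_def field_simps)
    then have "g y / y \<le> g v / v" using anti v_pos y by (auto simp: monotone_on_def)
    then have "t \<le> g v / v" using t(2) by linarith
    then have g_ge: "real m \<le> g v" using v_pos t_pos by (simp add: v_def field_simps)
    have "u0 \<le> 1 / t" using t(3) t_pos by (simp add: field_simps)
    also have "1 / t \<le> v" using m_ge t_pos by (simp add: v_def divide_right_mono)
    finally have "P v \<le> K * exp (- g v) / v\<^sup>2" by (rule tail)
    also have "\<dots> \<le> K * exp (- real m) / v\<^sup>2"
      using g_ge K by (intro divide_right_mono mult_left_mono) auto
    finally have "exp (real m + 1) * P v \<le> exp (real m + 1) * (K * exp (- real m) / v\<^sup>2)"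
      by (intro mult_left_mono) auto
    also have "\<dots> = exp 1 * K * t\<^sup>2 * (1 / (real m)\<^sup>2)"
      using t_pos m_ge by (simp add: v_def field_simps exp_add exp_minus power2_eq_square)
    finally show "exp (real m + 1) * P (real m / t) \<le> exp 1 * K * t\<^sup>2 * (1 / (real m)\<^sup>2)"
      by (simp add: v_def)
  qed
  also have "\<dots> = exp 1 * K * t\<^sup>2 * (\<Sum>m=1..nat \<lfloor>t * y\<rfloor>. 1 / (real m)\<^sup>2)"
    by (rule sum_distrib_left[symmetric])
  also have "\<dots> \<le> exp 1 * K * t\<^sup>2 * 2"
    using K sum_inverse_squares_le_2 by (intro mult_left_mono) auto
  finally show ?thesis by simp
qed

lemma (in prob_space) truncated_mgf_le:
  fixes Y :: "'a \<Rightarrow> real" and g :: "real \<Rightarrow> real"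
  assumes Y_meas[measurable]: "Y \<in> borel_measurable M" and Y_int: "integrable M Y"
    and Y2_int: "integrable M (\<lambda>\<omega>. (Y \<omega>)\<^sup>2)" and EY: "expectation Y = - a"
    and tail: "\<And>u. u \<ge> u0 \<Longrightarrow> prob {\<omega>\<in>space M. Y \<omega> > u} \<le> K * exp (- g u) / u\<^sup>2"
    and u0: "u0 > 0" and K: "K \<ge> 0"
    and anti: "antimono_on {0<..} (\<lambda>x. g x / x)"
    and y: "y > 0" and t: "0 \<le> t" "t \<le> g y / y" "t * u0 \<le> 1"
  shows "expectation (\<lambda>\<omega>. exp (t * Y \<omega>) * indicator {..y} (Y \<omega>))
           \<le> exp (- t * a + (expectation (\<lambda>\<omega>. (Y \<omega>)\<^sup>2) + 2 * exp 1 * K) * t\<^sup>2)"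
proof -
  define N where "N = nat \<lfloor>t * y\<rfloor>"
  define h where "h m \<omega> = exp (real m + 1) * indicator {real m / t<..} (Y \<omega>)" for m \<omega>
  have h_int: "integrable M (h m)" for m
  proof (rule integrable_const_bound[where B = "exp (real m + 1)"])
    show "AE \<omega> in M. norm (h m \<omega>) \<le> exp (real m + 1)" by (auto simp: h_def indicator_def)
  qed (unfold h_def, measurable)
  have E_h: "expectation (h m) = exp (real m + 1) * prob {\<omega>\<in>space M. real m / t < Y \<omega>}" for m
  proof -
    have "expectation (h m) = exp (real m + 1) * expectation (\<lambda>\<omega>. indicator {real m / t<..} (Y \<omega>))"
      unfolding h_def by (rule integral_mult_right_zero)
    also have "expectation (\<lambda>\<omega>. indicator {real m / t<..} (Y \<omega>) :: real)
        = expectation (indicator {\<omega>\<in>space M. real m / t < Y \<omega>})"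
      by (intro Bochner_Integration.integral_cong) (auto simp: indicator_def)
    finally show ?thesis by simp
  qed
  have trunc_int: "integrable M (\<lambda>\<omega>. exp (t * Y \<omega>) * indicator {..y} (Y \<omega>))"
  proof (rule integrable_const_bound[where B = "exp (t * y)"])
    show "AE \<omega> in M. norm (exp (t * Y \<omega>) * indicator {..y} (Y \<omega>)) \<le> exp (t * y)"
      using t by (auto simp: indicator_def mult_left_mono)
  qed simp
  have "expectation (\<lambda>\<omega>. exp (t * Y \<omega>) * indicator {..y} (Y \<omega>))
      \<le> expectation (\<lambda>\<omega>. 1 + t * Y \<omega> + t\<^sup>2 * (Y \<omega>)\<^sup>2 + (\<Sum>m=1..N. h m \<omega>))"
  proof (rule integral_mono[OF trunc_int])
    show "integrable M (\<lambda>\<omega>. 1 + t * Y \<omega> + t\<^sup>2 * (Y \<omega>)\<^sup>2 + (\<Sum>m=1..N. h m \<omega>))"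
      using Y_int Y2_int h_int by auto
    show "exp (t * Y \<omega>) * indicator {..y} (Y \<omega>) \<le> 1 + t * Y \<omega> + t\<^sup>2 * (Y \<omega>)\<^sup>2 + (\<Sum>m=1..N. h m \<omega>)"
      for \<omega> using exp_indicator_atMost_le[OF t(1), of "Y \<omega>" y]
      unfolding N_def h_def by (simp add: power_mult_distrib)
  qed
  also have "\<dots> = 1 + t * expectation Y + t\<^sup>2 * expectation (\<lambda>\<omega>. (Y \<omega>)\<^sup>2)
     + (\<Sum>m=1..N. exp (real m + 1) * prob {\<omega>\<in>space M. real m / t < Y \<omega>})"
    using Y_int Y2_int h_int
    by (simp add: Bochner_Integration.integral_add Bochner_Integration.integral_sum
        Bochner_Integration.integrable_add prob_space E_h)
  also have "(\<Sum>m=1..N. exp (real m + 1) * prob {\<omega>\<in>space M. real m / t < Y \<omega>}) \<le> 2 * exp 1 * K * t\<^sup>2"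
    unfolding N_def
    using sum_exp_tail_le[where P = "\<lambda>u. prob {\<omega>\<in>space M. Y \<omega> > u}", OF tail u0 K anti y t] by simp
  finally have "expectation (\<lambda>\<omega>. exp (t * Y \<omega>) * indicator {..y} (Y \<omega>))
      \<le> 1 + (- t * a + (expectation (\<lambda>\<omega>. (Y \<omega>)\<^sup>2) + 2 * exp 1 * K) * t\<^sup>2)"
    using EY by (simp add: algebra_simps)
  also have "\<dots> \<le> exp (- t * a + (expectation (\<lambda>\<omega>. (Y \<omega>)\<^sup>2) + 2 * exp 1 * K) * t\<^sup>2)"
    by (rule exp_ge_add_one_self)
  finally show ?thesis .
qed

lemma sum_partial_sums_eq_weighted_sum:
  "sum_partial_sums X n \<omega> = (\<Sum>j=1..n. real (Suc n - j) * X j \<omega>)"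
proof (induction n)
  case 0
  then show ?case by (simp add: sum_partial_sums_def)
next
  case (Suc n)
  have "(\<Sum>j=1..Suc n. real (Suc (Suc n) - j) * X j \<omega>)
      = (\<Sum>j=1..Suc n. real (Suc n - j) * X j \<omega>) + (\<Sum>j=1..Suc n. X j \<omega>)"
    by (subst sum.distrib[symmetric], intro sum.cong refl) (auto simp: Suc_diff_le algebra_simps)
  also have "(\<Sum>j=1..Suc n. real (Suc n - j) * X j \<omega>) = (\<Sum>j=1..n. real (Suc n - j) * X j \<omega>)"
    by simp
  finally show ?case using Suc by (simp add: sum_partial_sums_def partial_sum_def)
qed

lemma running_max_le_iff:
  "n \<ge> 1 \<Longrightarrow> running_max X n \<omega> \<le> y \<longleftrightarrow> (\<forall>j\<in>{1..n}. X j \<omega> \<le> y)"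
  unfolding running_max_def by (subst Max_le_iff) auto

lemma integral_comp_eq_if_distr_eq:
  fixes f :: "real \<Rightarrow> real"
  assumes [measurable]: "X \<in> borel_measurable M" "Y \<in> borel_measurable M" "f \<in> borel_measurable borel"
    and "distr M borel X = distr M borel Y"
  shows "(\<integral>\<omega>. f (X \<omega>) \<partial>M) = (\<integral>\<omega>. f (Y \<omega>) \<partial>M)"
proof -
  have "(\<integral>\<omega>. f (X \<omega>) \<partial>M) = integral\<^sup>L (distr M borel X) f" by (rule integral_distr[symmetric]) auto
  also have "\<dots> = integral\<^sup>L (distr M borel Y) f" by (simp only: assms(4))
  also have "\<dots> = (\<integral>\<omega>. f (Y \<omega>) \<partial>M)" by (rule integral_distr) auto
  finally show ?thesis .
qed

text \<open>The event max_j X_j <= y is carried by truncating every factor of the Chernoff product.\<close>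

lemma (in prob_space) prob_sum_partial_sums_running_max_le:
  fixes X :: "nat \<Rightarrow> 'a \<Rightarrow> real"
  assumes meas: "\<And>i. i \<ge> 1 \<Longrightarrow> X i \<in> borel_measurable M"
    and indep: "indep_vars (\<lambda>_. borel) X {1..}"
    and ident: "\<And>i. i \<ge> 1 \<Longrightarrow> distr M borel (X i) = distr M borel (X 1)"
    and n: "n \<ge> 1" and h: "h \<ge> 0"
  shows "measure M {\<omega> \<in> space M. sum_partial_sums X n \<omega> > x \<and> running_max X n \<omega> \<le> y}
    \<le> exp (- h * x) * (\<Prod>j=1..n. expectation (\<lambda>\<omega>. exp (h * real (Suc n - j) * X 1 \<omega>) * indicator {..y} (X 1 \<omega>)))"
proof -
  \<comment> \<open>Replacing the unused X 0 by 0 makes every X' j measurable unconditionally.\<close>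
  define X' where "X' j = (if j \<ge> 1 then X j else (\<lambda>_. 0))" for j
  have X'_meas[measurable]: "X' j \<in> borel_measurable M" for j using meas by (simp add: X'_def)
  have X'_eq: "j \<in> {1..n} \<Longrightarrow> X' j = X j" for j by (simp add: X'_def)
  define c where "c j = h * real (Suc n - j)" for j
  have c: "c j \<ge> 0" for j using h by (simp add: c_def)
  define \<phi> where "\<phi> j z = exp (c j * z) * indicator {..y} z" for j and z :: real
  have \<phi>_meas[measurable]: "\<phi> j \<in> borel_measurable borel" for j unfolding \<phi>_def by measurable
  have \<phi>_nonneg: "\<phi> j z \<ge> 0" for j z by (simp add: \<phi>_def)
  define S where "S = {\<omega> \<in> space M. (\<Sum>j=1..n. real (Suc n - j) * X' j \<omega>) > x \<and> (\<forall>j\<in>{1..n}. X' j \<omega> \<le> y)}"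
  have S_eq: "{\<omega> \<in> space M. sum_partial_sums X n \<omega> > x \<and> running_max X n \<omega> \<le> y} = S"
    unfolding S_def using n by (auto simp: sum_partial_sums_eq_weighted_sum running_max_le_iff X'_eq)
  have S_sets: "S \<in> sets M" unfolding S_def by measurable
  have indep_\<phi>: "indep_vars (\<lambda>_. borel) (\<lambda>j \<omega>. \<phi> j (X' j \<omega>)) {1..n}"
  proof -
    have "indep_vars (\<lambda>_. borel) X {1..n}" using indep by (rule indep_vars_subset) auto
    then have "indep_vars (\<lambda>_. borel) X' {1..n}"
      by (rule indep_vars_cong[THEN iffD1, rotated 3]) (auto simp: X'_eq)
    then show ?thesis by (rule indep_vars_compose2) simp
  qed
  have \<phi>_int: "integrable M (\<lambda>\<omega>. \<phi> j (X' j \<omega>))" for j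
  proof (rule integrable_const_bound[where B = "exp (c j * y)"])
    show "AE \<omega> in M. norm (\<phi> j (X' j \<omega>)) \<le> exp (c j * y)"
      using c[of j] by (auto simp: \<phi>_def indicator_def mult_left_mono)
  qed simp
  have markov: "indicator S \<omega> \<le> exp (- h * x) * (\<Prod>j=1..n. \<phi> j (X' j \<omega>))" for \<omega>
  proof (cases "\<omega> \<in> S")
    case False
    then show ?thesis by (simp add: prod_nonneg \<phi>_nonneg)
  next
    case True
    then have A: "(\<Sum>j=1..n. real (Suc n - j) * X' j \<omega>) > x" and max: "\<forall>j\<in>{1..n}. X' j \<omega> \<le> y"
      unfolding S_def by auto
    have "(\<Prod>j=1..n. \<phi> j (X' j \<omega>)) = exp (\<Sum>j=1..n. c j * X' j \<omega>)"
      unfolding \<phi>_def using max by (simp add: exp_sum)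
    also have "(\<Sum>j=1..n. c j * X' j \<omega>) = h * (\<Sum>j=1..n. real (Suc n - j) * X' j \<omega>)"
      unfolding c_def by (simp add: sum_distrib_left mult.assoc)
    finally have "exp (- h * x) * (\<Prod>j=1..n. \<phi> j (X' j \<omega>))
        = exp (h * ((\<Sum>j=1..n. real (Suc n - j) * X' j \<omega>) - x))"
      by (simp add: exp_add[symmetric] algebra_simps)
    moreover have "1 \<le> exp (h * ((\<Sum>j=1..n. real (Suc n - j) * X' j \<omega>) - x))" using A h by simp
    ultimately show ?thesis using True by (metis indicator_simps(1))
  qed
  have "measure M S = expectation (indicator S)"
    using S_sets sets.sets_into_space by (simp add: Int_absorb2)
  also have "\<dots> \<le> expectation (\<lambda>\<omega>. exp (- h * x) * (\<Prod>j=1..n. \<phi> j (X' j \<omega>)))"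
    using S_sets indep_\<phi> \<phi>_int markov
    by (intro integral_mono) (auto simp: emeasure_eq_measure intro!: indep_vars_integrable)
  also have "\<dots> = exp (- h * x) * (\<Prod>j=1..n. expectation (\<lambda>\<omega>. \<phi> j (X' j \<omega>)))"
    using indep_\<phi> \<phi>_int by (simp add: indep_vars_lebesgue_integral)
  also have "(\<Prod>j=1..n. expectation (\<lambda>\<omega>. \<phi> j (X' j \<omega>))) = (\<Prod>j=1..n. expectation (\<lambda>\<omega>. \<phi> j (X 1 \<omega>)))"
  proof (rule prod.cong[OF refl])
    fix j assume j: "j \<in> {1..n}"
    show "expectation (\<lambda>\<omega>. \<phi> j (X' j \<omega>)) = expectation (\<lambda>\<omega>. \<phi> j (X 1 \<omega>))"
      unfolding X'_eq[OF j] using j by (intro integral_comp_eq_if_distr_eq meas \<phi>_meas ident) auto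
  qed
  finally show ?thesis by (simp add: S_eq \<phi>_def c_def)
qed

lemma (in prob_space) prob_sum_partial_sums_running_max_le_exp:
  fixes X :: "nat \<Rightarrow> 'a \<Rightarrow> real"
  assumes meas: "\<And>i. i \<ge> 1 \<Longrightarrow> X i \<in> borel_measurable M"
    and indep: "indep_vars (\<lambda>_. borel) X {1..}"
    and ident: "\<And>i. i \<ge> 1 \<Longrightarrow> distr M borel (X i) = distr M borel (X 1)"
    and n: "n \<ge> 1" and l: "l \<ge> 0" and a: "a \<ge> 0" and C: "C \<ge> 0"
    and mgf: "\<And>t. 0 \<le> t \<Longrightarrow> t \<le> l \<Longrightarrow>
      expectation (\<lambda>\<omega>. exp (t * X 1 \<omega>) * indicator {..y} (X 1 \<omega>)) \<le> exp (- t * a + C * t\<^sup>2)"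
  shows "measure M {\<omega> \<in> space M. sum_partial_sums X n \<omega> > x \<and> running_max X n \<omega> \<le> y}
    \<le> exp (- l * x / real n - l * a * real n / 2 + C * l\<^sup>2 * real n)"
proof -
  define t where "t j = l / real n * real (Suc n - j)" for j
  have t: "0 \<le> t j" "t j \<le> l" if "j \<in> {1..n}" for j
    unfolding t_def using linear_weight_bounds[OF l that] .
  have "measure M {\<omega> \<in> space M. sum_partial_sums X n \<omega> > x \<and> running_max X n \<omega> \<le> y}
      \<le> exp (- (l / real n) * x) * (\<Prod>j=1..n. expectation (\<lambda>\<omega>. exp (t j * X 1 \<omega>) * indicator {..y} (X 1 \<omega>)))"
    using prob_sum_partial_sums_running_max_le[OF meas indep ident n, of "l / real n" x y] l
    by (simp add: t_def)
  also have "\<dots> \<le> exp (- (l / real n) * x) * (\<Prod>j=1..n. exp (- t j * a + C * (t j)\<^sup>2))"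
    using mgf t by (intro mult_left_mono prod_mono conjI integral_nonneg_AE) auto
  also have "\<dots> = exp (- (l / real n) * x + (\<Sum>j=1..n. - t j * a + C * (t j)\<^sup>2))"
    unfolding exp_add exp_sum[OF finite_atLeastAtMost] ..
  also have "\<dots> \<le> exp (- (l / real n) * x + (- l * a * real n / 2 + C * l\<^sup>2 * real n))"
    using sum_linear_weights_exponent_le[OF n l a C] by (simp add: t_def)
  finally show ?thesis by (simp add: algebra_simps)
qed

theorem mainTheorem6:
  fixes M :: "'a measure" and X :: "nat \<Rightarrow> 'a \<Rightarrow> real"
    and a :: real and g :: "real \<Rightarrow> real"
  assumes "prob_space M"
    and meas: "\<And>i. i \<ge> 1 \<Longrightarrow> X i \<in> borel_measurable M"
    and indep: "prob_space.indep_vars M (\<lambda>_. borel) X {1..}"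
    and ident: "\<And>i. i \<ge> 1 \<Longrightarrow> distr M borel (X i) = distr M borel (X 1)"
    and "a > 0"
    and "integrable M (X 1)" and "(\<integral>\<omega>. X 1 \<omega> \<partial>M) = - a"
    and "integrable M (\<lambda>\<omega>. (X 1 \<omega>)\<^sup>2)"
    and tail: "(\<lambda>x. measure M {\<omega> \<in> space M. X 1 \<omega> > x}) \<sim>[at_top] (\<lambda>x. exp (- g x) * x powi (-2))"
    and "g C1_differentiable_on {0<..}"
    and "\<exists>x0. mono_on {x0..} g"
    and "antimono_on {0<..} (\<lambda>x. g x / x)"
    and "((\<lambda>x. g x / x) \<longlongrightarrow> 0) at_top"
  shows "\<exists>C>0. \<forall>\<^sub>F y in at_top. \<forall>n\<ge>1. \<forall>x>0.
           measure M {\<omega> \<in> space M. sum_partial_sums X n \<omega> > x \<and> running_max X n \<omega> \<le> y}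
             \<le> exp (- (g y / y) * x / real n - (g y / y) * a * real n / 2 + C * (g y / y)\<^sup>2 * real n)"
proof -
  interpret prob_space M by fact
  obtain x0 where mono: "mono_on {x0..} g" using assms(11) by blast
  obtain u0 where u0: "u0 > 0" and tail_le: "\<And>u. u \<ge> u0 \<Longrightarrow> prob {\<omega>\<in>space M. X 1 \<omega> > u} \<le> 2 * exp (- g u) / u\<^sup>2"
    using tail_bound_if_asymp_equiv[OF tail] by blast
  define C where "C = expectation (\<lambda>\<omega>. (X 1 \<omega>)\<^sup>2) + 2 * exp 1 * 2"
  have C: "C > 0" unfolding C_def by (intro add_nonneg_pos integral_nonneg_AE) auto
  have "\<forall>\<^sub>F y in at_top. g y / y < 1 / u0" using order_tendstoD(2)[OF assms(13)] u0 by simp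
  moreover have "\<forall>\<^sub>F y in at_top. y \<ge> max x0 1" by (rule eventually_ge_at_top)
  ultimately have "\<forall>\<^sub>F y in at_top. \<forall>n\<ge>1. \<forall>x>0.
      measure M {\<omega> \<in> space M. sum_partial_sums X n \<omega> > x \<and> running_max X n \<omega> \<le> y}
        \<le> exp (- (g y / y) * x / real n - (g y / y) * a * real n / 2 + C * (g y / y)\<^sup>2 * real n)"
  proof eventually_elim
    case (elim y)
    then have y: "y > 0" "y \<ge> x0" by auto
    have l: "g y / y \<ge> 0" using nonneg_if_mono_on_and_ratio_antimono[OF mono assms(12) y(2,1)] y by simp
    have mgf: "expectation (\<lambda>\<omega>. exp (t * X 1 \<omega>) * indicator {..y} (X 1 \<omega>)) \<le> exp (- t * a + C * t\<^sup>2)"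
      if "0 \<le> t" "t \<le> g y / y" for t
    proof -
      have "t * u0 \<le> g y / y * u0" using that u0 by (intro mult_right_mono) auto
      also have "\<dots> < 1" using elim(1) u0 by (simp add: field_simps)
      finally have "t * u0 \<le> 1" by simp
      then show ?thesis unfolding C_def
        using that truncated_mgf_le[OF _ assms(6,8,7) tail_le u0 _ assms(12) y(1)] meas by simp
    qed
    show ?case using prob_sum_partial_sums_running_max_le_exp[OF meas indep ident _ l _ _ mgf]
        \<open>a > 0\<close> C by simp
  qed
  then show ?thesis using C by blast
qed

end
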